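(* Let $r\ge 3$ and $n\ge 2r$, and let $M$ be a matroid of rank $r$ on a linearly ordered set $E$ with $|E|=n$. Then \[ \sum_{k=0}^{r-1}|\mathcal V_k|\,c_k\le 1,\qquad\text{where } c_{r-1}=\frac{r}{\binom{n}{r-1}},\quad c_0=\frac1n,\quad c_k=\frac{k}{\binom nk}\ (0<k<r-1). \]
   Context: Graded lexicographic order on $2^E$: $X\prec Y$ if $|X|<|Y|$, or $|X|=|Y|$ and $\min(X\triangle Y)\in X$; $\min\mathcal X$ is the $\prec$-smallest member. $X$ is $k$-closed in $M$ if $\mathrm{cl}_M(Y)\subseteq X$ for all $Y\subseteq X$ with $|Y|\le k$; $\mathrm{cl}_k(X)$ is the intersection of all $k$-closed supersets of $X$ (so $\mathrm{cl}_{-1}(X)=X$). For a flat $F$ of rank $k$, $U^*_F=\min\{U:\mathrm{cl}_{k-1}(U)=F\}$; $\mathcal U^*_k=\{U^*_F: F\text{ a flat of rank }k,\ |U^*_F|>k\}$. $V\subseteq U$ is consecutive in $U$ if there are no $e,g\in V$, $f\in U\setminus V$ with $e<f<g$. For $U\in\mathcal U^*_k$, $\mathcal V(U)$ is the set of consecutive $(k+1)$-subsets of $U$, and $\mathcal V_k=\bigcup_{U\in\mathcal U^*_k}\mathcal V(U)$. *)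

theory Defs
  imports Complex_Main
begin

definition matroid :: "'a set \<Rightarrow> ('a set \<Rightarrow> bool) \<Rightarrow> bool" where
  "matroid E indep \<longleftrightarrow> finite E \<and> indep {} \<and>
     (\<forall>X. indep X \<longrightarrow> X \<subseteq> E) \<and>
     (\<forall>X Y. indep X \<and> Y \<subseteq> X \<longrightarrow> indep Y) \<and>
     (\<forall>X Y. indep X \<and> indep Y \<and> card X < card Y \<longrightarrow>
        (\<exists>e \<in> Y - X. indep (insert e X)))"

definition mrank :: "('a set \<Rightarrow> bool) \<Rightarrow> 'a set \<Rightarrow> nat" where
  "mrank indep X = Max {card I | I. I \<subseteq> X \<and> indep I}"

definition mcl :: "'a set \<Rightarrow> ('a set \<Rightarrow> bool) \<Rightarrow> 'a set \<Rightarrow> 'a set" where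
  "mcl E indep X = {e \<in> E. mrank indep (insert e X) = mrank indep X}"

definition flat :: "'a set \<Rightarrow> ('a set \<Rightarrow> bool) \<Rightarrow> 'a set \<Rightarrow> bool" where
  "flat E indep F \<longleftrightarrow> F \<subseteq> E \<and> mcl E indep F = F"

text \<open>X is k-closed: cl(Y) \<subseteq> X for all Y \<subseteq> X with |Y| \<le> k (k an integer, possibly -1).\<close>
definition k_closed :: "'a set \<Rightarrow> ('a set \<Rightarrow> bool) \<Rightarrow> int \<Rightarrow> 'a set \<Rightarrow> bool" where
  "k_closed E indep k X \<longleftrightarrow> X \<subseteq> E \<and>
     (\<forall>Y. Y \<subseteq> X \<and> int (card Y) \<le> k \<longrightarrow> mcl E indep Y \<subseteq> X)"

definition clk :: "'a set \<Rightarrow> ('a set \<Rightarrow> bool) \<Rightarrow> int \<Rightarrow> 'a set \<Rightarrow> 'a set" where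
  "clk E indep k X = \<Inter> {Z. X \<subseteq> Z \<and> k_closed E indep k Z}"

definition glex_less :: "'a::linorder set \<Rightarrow> 'a set \<Rightarrow> bool" where
  "glex_less X Y \<longleftrightarrow> card X < card Y \<or>
     (card X = card Y \<and> X \<noteq> Y \<and> Min (X - Y \<union> (Y - X)) \<in> X)"

definition glex_min :: "'a::linorder set set \<Rightarrow> 'a set" where
  "glex_min \<X> = (THE U. U \<in> \<X> \<and> (\<forall>V \<in> \<X>. V \<noteq> U \<longrightarrow> glex_less U V))"

definition Ustar :: "'a::linorder set \<Rightarrow> ('a set \<Rightarrow> bool) \<Rightarrow> 'a set \<Rightarrow> 'a set" where
  "Ustar E indep F =
     glex_min {U. U \<subseteq> E \<and> clk E indep (int (mrank indep F) - 1) U = F}"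

definition Ustar_k :: "'a::linorder set \<Rightarrow> ('a set \<Rightarrow> bool) \<Rightarrow> nat \<Rightarrow> 'a set set" where
  "Ustar_k E indep k = {Ustar E indep F | F. flat E indep F \<and> mrank indep F = k
                              \<and> card (Ustar E indep F) > k}"

definition consecutive :: "'a::linorder set \<Rightarrow> 'a set \<Rightarrow> bool" where
  "consecutive V U \<longleftrightarrow> V \<subseteq> U \<and>
     \<not> (\<exists>e \<in> V. \<exists>g \<in> V. \<exists>f \<in> U - V. e < f \<and> f < g)"

definition Vsets :: "nat \<Rightarrow> 'a::linorder set \<Rightarrow> 'a set set" where
  "Vsets k U = {V. V \<subseteq> U \<and> card V = k + 1 \<and> consecutive V U}"

definition V_k :: "'a::linorder set \<Rightarrow> ('a set \<Rightarrow> bool) \<Rightarrow> nat \<Rightarrow> 'a set set" where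
  "V_k E indep k = (\<Union>U \<in> Ustar_k E indep k. Vsets k U)"

definition coef :: "nat \<Rightarrow> nat \<Rightarrow> nat \<Rightarrow> real" where
  "coef n r k = (if k = r - 1 then real r / real (n choose (r - 1))
                 else if k = 0 then 1 / real n
                 else real k / real (n choose k))"

end

theory Submission
  imports Defs
begin

text \<open>
  The sets weighted by the coefficients \<open>c\<^sub>k\<close> form an antichain of subsets of \<open>E\<close>,
  and the bound is the LYM inequality for it. Level \<open>0\<close> consists of the members of \<open>V_0\<close>,
  which are loops. For \<open>0 < k < r - 1\<close>, each \<open>V \<in> V_k\<close> contributes the \<open>k\<close> sets \<open>V - {x}\<close>
  with \<open>x \<noteq> max V\<close>: such a set spans the flat \<open>F\<close> with \<open>V \<subseteq> U\<^sup>*\<^sub>F\<close>, which determines \<open>F\<close>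
  and then, by consecutiveness, \<open>V\<close> and \<open>x\<close>; and it lies in no \<open>U\<^sup>*\<^sub>F\<^sub>'\<close> of higher rank,
  because exchanging \<open>max V\<close> for the smaller \<open>x\<close> would not change the closure and would
  contradict the lexicographic minimality of \<open>U\<^sup>*\<^sub>F\<^sub>'\<close>. Level \<open>r - 1\<close> consists of all
  \<open>(r - 1)\<close>-subsets of the members of \<open>\<U>\<^sup>*\<^sub>r\<^sub>-\<^sub>1\<close>; a set \<open>U\<close> has at most
  \<open>|U| - r + 1\<close> consecutive \<open>r\<close>-subsets, and \<open>r (m - r + 1) \<le> C(m, r - 1)\<close> for
  \<open>m \<ge> r \<ge> 3\<close>.
\<close>

subsection \<open>The LYM inequality\<close>

definition antichain :: "'a set set \<Rightarrow> bool" where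
  "antichain \<A> \<longleftrightarrow> (\<forall>S\<in>\<A>. \<forall>T\<in>\<A>. S \<subseteq> T \<longrightarrow> S = T)"

lemma antichain_subset: "antichain \<A> \<Longrightarrow> \<B> \<subseteq> \<A> \<Longrightarrow> antichain \<B>"
  unfolding antichain_def by blast

lemma LYM_inequality_nat:
  assumes "finite E" "\<A> \<subseteq> Pow E" "antichain \<A>"
  shows "(\<Sum>S\<in>\<A>. fact (card S) * fact (card E - card S)) \<le> (fact (card E) :: nat)"
  using assms
proof (induction "card E" arbitrary: E \<A> rule: less_induct)
  case less
  show ?case
  proof (cases "E \<in> \<A>")
    case True
    then have "\<A> = {E}" using less.prems(2,3) unfolding antichain_def by blast
    then show ?thesis by simp
  next
    case False
    let ?g = "\<lambda>S. fact (card S) * fact (card E - 1 - card S) :: nat"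
    have fin: "finite \<A>" using less.prems finite_subset by (metis finite_Pow_iff)
    have card_less: "card S < card E" if "S \<in> \<A>" for S
      using False that less.prems by (metis PowD psubsetI psubset_card_mono subsetD)
    \<comment> \<open>Count the pairs \<open>(S, x)\<close> with \<open>x \<notin> S\<close> and apply the induction hypothesis to \<open>E - {x}\<close>.\<close>
    have "(\<Sum>S\<in>\<A>. fact (card S) * fact (card E - card S)) = (\<Sum>S\<in>\<A>. \<Sum>x\<in>{x\<in>E. x \<notin> S}. ?g S)"
    proof (rule sum.cong[OF refl])
      fix S assume S: "S \<in> \<A>"
      then have "card {x\<in>E. x \<notin> S} = card E - card S"
        using less.prems by (metis Diff_iff PowD card_Diff_subset finite_subset set_diff_eq subsetD subsetI)
      moreover have "card E - card S = Suc (card E - 1 - card S)" using card_less[OF S] by simp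
      ultimately show "fact (card S) * fact (card E - card S) = (\<Sum>x\<in>{x\<in>E. x \<notin> S}. ?g S)"
        by (simp add: algebra_simps)
    qed
    also have "\<dots> = (\<Sum>x\<in>E. \<Sum>S\<in>{S\<in>\<A>. x \<notin> S}. ?g S)"
      using sum.swap_restrict[OF fin less.prems(1), of "\<lambda>S x. ?g S" "\<lambda>S x. x \<notin> S"] by simp
    also have "\<dots> \<le> (\<Sum>x\<in>E. fact (card E - 1))"
    proof (rule sum_mono)
      fix x assume x: "x \<in> E"
      have "card (E - {x}) < card E" using x less.prems(1) by (rule card_Diff1_less[rotated])
      moreover have "{S \<in> \<A>. x \<notin> S} \<subseteq> Pow (E - {x})" "antichain {S \<in> \<A>. x \<notin> S}"
        using less.prems antichain_subset[of \<A>] by auto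
      ultimately show "(\<Sum>S\<in>{S\<in>\<A>. x \<notin> S}. ?g S) \<le> fact (card E - 1)"
        using less.hyps[of "E - {x}"] x less.prems(1) by simp
    qed
    also have "\<dots> \<le> fact (card E)"
      by (cases "card E") (simp_all add: fact_reduce)
    finally show ?thesis .
  qed
qed

lemma LYM_inequality:
  assumes "finite E" "\<A> \<subseteq> Pow E" "antichain \<A>"
  shows "(\<Sum>S\<in>\<A>. 1 / real (card E choose card S)) \<le> 1"
proof -
  have "(\<Sum>S\<in>\<A>. 1 / real (card E choose card S))
      = real (\<Sum>S\<in>\<A>. fact (card S) * fact (card E - card S)) / fact (card E)"
    unfolding of_nat_sum sum_divide_distrib
  proof (rule sum.cong[OF refl])
    fix S assume "S \<in> \<A>"
    then have "card S \<le> card E" using assms by (meson PowD card_mono subsetD)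
    then show "1 / real (card E choose card S)
        = real (fact (card S) * fact (card E - card S)) / fact (card E)"
      by (simp add: binomial_fact)
  qed
  also have "\<dots> \<le> 1"
  proof -
    have "real (\<Sum>S\<in>\<A>. fact (card S) * fact (card E - card S)) \<le> real (fact (card E))"
      using LYM_inequality_nat[OF assms] by linarith
    then show ?thesis by (simp add: divide_le_eq_1)
  qed
  finally show ?thesis .
qed

subsection \<open>The graded lexicographic order\<close>

lemma glex_less_card_le: "glex_less X Y \<Longrightarrow> card X \<le> card Y"
  by (auto simp: glex_less_def)

lemma glex_less_if_card_less: "card X < card Y \<Longrightarrow> glex_less X Y"
  by (simp add: glex_less_def)

lemma glex_less_same_card_iff:
  assumes "finite X" "finite Y" "card X = card Y"
  shows "glex_less X Y \<longleftrightarrow> (\<exists>a \<in> X - Y. \<forall>w < a. w \<in> X \<longleftrightarrow> w \<in> Y)"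
proof
  let ?D = "X - Y \<union> (Y - X)"
  assume "glex_less X Y"
  then have "?D \<noteq> {}" "Min ?D \<in> X" using assms(3) unfolding glex_less_def by auto
  moreover from this have "Min ?D \<in> ?D" using assms by (intro Min_in) auto
  moreover have "w \<in> X \<longleftrightarrow> w \<in> Y" if "w < Min ?D" for w
    using that Min_le[of ?D w] assms by fastforce
  ultimately show "\<exists>a \<in> X - Y. \<forall>w < a. w \<in> X \<longleftrightarrow> w \<in> Y" by blast
next
  assume "\<exists>a \<in> X - Y. \<forall>w < a. w \<in> X \<longleftrightarrow> w \<in> Y"
  then obtain a where a: "a \<in> X - Y" and below: "\<And>w. w < a \<Longrightarrow> w \<in> X \<longleftrightarrow> w \<in> Y" by blast
  have "Min (X - Y \<union> (Y - X)) = a"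
    using assms a below by (intro Min_eqI) (auto simp flip: not_less)
  then show "glex_less X Y" using a assms(3) unfolding glex_less_def by auto
qed

lemma glex_less_asym:
  assumes "finite X" "finite Y" "glex_less X Y"
  shows "\<not> glex_less Y X"
proof
  assume "glex_less Y X"
  then have "card X = card Y" using assms(3) glex_less_card_le le_antisym by blast
  then obtain a b where "a \<in> X - Y" "\<forall>w < a. w \<in> X \<longleftrightarrow> w \<in> Y"
    and "b \<in> Y - X" "\<forall>w < b. w \<in> Y \<longleftrightarrow> w \<in> X"
    using assms \<open>glex_less Y X\<close> glex_less_same_card_iff[of X Y] glex_less_same_card_iff[of Y X]
    by auto
  then show False by (cases a b rule: linorder_cases) auto
qed

lemma glex_less_trans:
  assumes "finite X" "finite Y" "finite Z" "glex_less X Y" "glex_less Y Z"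
  shows "glex_less X Z"
proof -
  have "card X \<le> card Y" "card Y \<le> card Z" using assms(4,5) by (auto dest: glex_less_card_le)
  show ?thesis
  proof (cases "card X = card Z")
    case False
    then show ?thesis using \<open>card X \<le> card Y\<close> \<open>card Y \<le> card Z\<close>
      by (intro glex_less_if_card_less) linarith
  next
    case True
    then have "card X = card Y" "card Y = card Z" using \<open>card X \<le> card Y\<close> \<open>card Y \<le> card Z\<close> by auto
    then obtain a b where "a \<in> X - Y" "\<forall>w < a. w \<in> X \<longleftrightarrow> w \<in> Y"
      and "b \<in> Y - Z" "\<forall>w < b. w \<in> Y \<longleftrightarrow> w \<in> Z"
      using assms glex_less_same_card_iff[of X Y] glex_less_same_card_iff[of Y Z] by auto
    then have "min a b \<in> X - Z \<and> (\<forall>w < min a b. w \<in> X \<longleftrightarrow> w \<in> Z)"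
      by (cases a b rule: linorder_cases) auto
    then show ?thesis using glex_less_same_card_iff[of X Z] assms True by blast
  qed
qed

lemma glex_less_total:
  assumes "finite X" "finite Y" "X \<noteq> Y"
  shows "glex_less X Y \<or> glex_less Y X"
proof (cases "card X = card Y")
  case True
  let ?D = "X - Y \<union> (Y - X)"
  have "Min ?D \<in> ?D" using assms by (intro Min_in) auto
  then consider "Min ?D \<in> X" | "Min ?D \<in> Y" by blast
  then show ?thesis
  proof cases
    case 1
    then show ?thesis using True assms(3) unfolding glex_less_def by blast
  next
    case 2
    moreover have "Y - X \<union> (X - Y) = ?D" by blast
    ultimately show ?thesis using True assms(3) unfolding glex_less_def by auto
  qed
qed (auto simp: glex_less_def)

lemma glex_less_exchange:
  assumes "finite U" "m \<in> U" "x \<notin> U" "x < m"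
  shows "glex_less (insert x (U - {m})) U"
proof -
  have "card (insert x (U - {m})) = card U"
    using assms card_Suc_Diff1[OF assms(1,2)] by simp
  moreover have "x \<in> insert x (U - {m}) - U" using assms(3) by simp
  moreover have "\<forall>w < x. w \<in> insert x (U - {m}) \<longleftrightarrow> w \<in> U"
    using assms(4) by auto
  ultimately show ?thesis
    using assms(1) glex_less_same_card_iff[of "insert x (U - {m})" U] by blast
qed

lemma ex_glex_least:
  assumes "finite \<X>" "\<X> \<noteq> {}" "\<forall>X\<in>\<X>. finite X"
  shows "\<exists>U\<in>\<X>. \<forall>V\<in>\<X>. V \<noteq> U \<longrightarrow> glex_less U V"
  using assms
proof (induction \<X> rule: finite_ne_induct)
  case (insert X \<X>)
  then obtain U where U: "U \<in> \<X>" "\<forall>V\<in>\<X>. V \<noteq> U \<longrightarrow> glex_less U V" by auto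
  then have "X \<noteq> U" using insert.hyps by auto
  then consider "glex_less X U" | "glex_less U X"
    using glex_less_total insert.prems U by blast
  then show ?case
  proof cases
    case 1
    have "glex_less X V" if "V \<in> \<X>" for V
    proof (cases "V = U")
      case False
      then show ?thesis using 1 U that insert.prems glex_less_trans[of X U V] by simp
    qed (use 1 in simp)
    then show ?thesis by auto
  next
    case 2
    then show ?thesis using U by auto
  qed
qed simp

lemma glex_min_least:
  assumes "finite \<X>" "\<X> \<noteq> {}" "\<forall>X\<in>\<X>. finite X"
  shows "glex_min \<X> \<in> \<X> \<and> (\<forall>V\<in>\<X>. \<not> glex_less V (glex_min \<X>))"
proof -
  obtain U where U: "U \<in> \<X>" "\<forall>V\<in>\<X>. V \<noteq> U \<longrightarrow> glex_less U V"
    using ex_glex_least[OF assms] by blast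
  have U_least: "\<not> glex_less V U" if "V \<in> \<X>" for V
  proof (cases "V = U")
    case False
    then show ?thesis using U that assms(3) glex_less_asym[of U V] by simp
  qed (simp add: glex_less_def)
  have "glex_min \<X> = U"
    unfolding glex_min_def
  proof (rule the_equality)
    fix W assume "W \<in> \<X> \<and> (\<forall>V\<in>\<X>. V \<noteq> W \<longrightarrow> glex_less W V)"
    then show "W = U" using U(1) U_least by blast
  qed (use U in blast)
  then show ?thesis using U(1) U_least by simp
qed

subsection \<open>Consecutive subsets\<close>

lemma consecutive_eq_if_Max_eq:
  assumes "finite U" "consecutive V U" "consecutive W U"
    and "card V = card W" "V \<noteq> {}" "Max V = Max W"
  shows "V = W"
proof (rule ccontr)
  assume "V \<noteq> W"
  have VU: "V \<subseteq> U" and WU: "W \<subseteq> U" using assms(2,3) unfolding consecutive_def by blast+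
  have fV: "finite V" and fW: "finite W" using VU WU assms(1) finite_subset by blast+
  have "\<not> V \<subseteq> W" using card_subset_eq[OF fW] assms(4) \<open>V \<noteq> W\<close> by blast
  then obtain a where a: "a \<in> V" "a \<notin> W" by blast
  define m where "m = Max V"
  have "W \<noteq> {}" using assms(4,5) fV by auto
  have mV: "m \<in> V" using Max_in[OF fV assms(5)] unfolding m_def .
  have mW: "m \<in> W" using Max_in[OF fW \<open>W \<noteq> {}\<close>] assms(6) unfolding m_def by simp
  have "a \<le> m" "a \<noteq> m" using Max_ge[OF fV a(1)] a(2) mW unfolding m_def by auto
  then have "a < m" by simp
  have above: "a < w" if "w \<in> W" for w
  proof (rule ccontr)
    assume "\<not> a < w"
    then have "w < a" using that a(2) by (cases w a rule: linorder_cases) auto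
    then show False using that mW a \<open>a < m\<close> VU assms(3) unfolding consecutive_def by blast
  qed
  define S where "S = {u\<in>U. a < u \<and> u \<le> m}"
  have "W \<subseteq> S"
    using above WU Max_ge[OF fW] assms(6) unfolding S_def m_def by auto
  have "insert a S \<subseteq> V"
  proof
    fix u assume "u \<in> insert a S"
    then consider "u = a" | "u = m" | "u \<in> U" "a < u" "u < m" unfolding S_def by fastforce
    then show "u \<in> V"
      using a(1) mV \<open>a < m\<close> assms(2) unfolding consecutive_def by cases blast+
  qed
  have "finite S" "a \<notin> S" unfolding S_def using assms(1) by auto
  then have "Suc (card W) \<le> card V"
    using card_mono[OF _ \<open>W \<subseteq> S\<close>] card_mono[OF fV \<open>insert a S \<subseteq> V\<close>] by simp
  then show False using assms(4) by simp
qed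

lemma card_Vsets_le:
  fixes U :: "'a::linorder set"
  assumes "finite U"
  shows "card (Vsets k U) \<le> card U - k"
proof -
  \<comment> \<open>\<open>Max\<close> is injective on \<open>Vsets k U\<close> and maps it to elements with at least \<open>k\<close> predecessors in \<open>U\<close>.\<close>
  define pos where "pos u = card {w\<in>U. w < u}" for u
  have pos_mono: "pos u < pos u'" if "u \<in> U" "u' \<in> U" "u < u'" for u u'
    unfolding pos_def using that assms by (intro psubset_card_mono) auto
  have "inj_on pos U"
    by (rule inj_onI) (metis pos_mono less_irrefl linorder_neqE)
  have pos_less: "pos u < card U" if "u \<in> U" for u
    unfolding pos_def using that assms by (intro psubset_card_mono) auto
  define T where "T = {u\<in>U. k \<le> pos u}"
  have "inj_on Max (Vsets k U)"
  proof (rule inj_onI)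
    fix V W assume "V \<in> Vsets k U" "W \<in> Vsets k U" "Max V = Max W"
    then show "V = W" using consecutive_eq_if_Max_eq[OF assms] by (force simp: Vsets_def)
  qed
  have "Max ` Vsets k U \<subseteq> T"
  proof
    fix u assume "u \<in> Max ` Vsets k U"
    then obtain V where V: "V \<subseteq> U" "card V = Suc k" and u: "u = Max V"
      by (auto simp: Vsets_def)
    then have fV: "finite V" "V \<noteq> {}" using assms finite_subset by auto
    then have uV: "u \<in> V" unfolding u by (rule Max_in)
    have "V - {u} \<subseteq> {w\<in>U. w < u}"
      using V(1) Max_ge[OF fV(1)] unfolding u by (auto intro: le_neq_trans)
    then have "card (V - {u}) \<le> pos u" unfolding pos_def using assms by (intro card_mono) auto
    then show "u \<in> T" unfolding T_def using uV V fV by auto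
  qed
  then have "card (Max ` Vsets k U) \<le> card T"
    using assms by (intro card_mono) (auto simp: T_def)
  with \<open>inj_on Max (Vsets k U)\<close> have "card (Vsets k U) \<le> card T"
    by (simp add: card_image)
  also have "\<dots> = card (pos ` T)"
    using \<open>inj_on pos U\<close> by (intro card_image[symmetric]) (auto simp: T_def intro: inj_on_subset)
  also have "\<dots> \<le> card {k..<card U}"
    using pos_less by (intro card_mono) (auto simp: T_def)
  finally show ?thesis by simp
qed

lemma binomial_ge_Suc_mult:
  assumes "2 \<le> k" "Suc k \<le> m"
  shows "Suc k * (m - k) \<le> m choose k"
  using assms(2)
proof (induction m rule: dec_induct)
  case base
  then show ?case by simp
next
  case (step m)
  have "m \<le> m choose (k - 1)" using assms step.hyps by (intro upper_le_binomial) auto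
  moreover have "Suc m choose k = (m choose (k - 1)) + (m choose k)"
    using assms by (metis Suc_diff_1 binomial_Suc_Suc less_le_trans pos2)
  moreover have "Suc k * (Suc m - k) = Suc k * (m - k) + Suc k"
    using step.hyps by (simp add: Suc_diff_le)
  ultimately show ?case using step.IH step.hyps by linarith
qed

subsection \<open>Matroid rank and closure\<close>

lemma clk_superset: "X \<subseteq> clk E indep k X"
  unfolding clk_def by blast

lemma clk_least: "k_closed E indep k Z \<Longrightarrow> X \<subseteq> Z \<Longrightarrow> clk E indep k X \<subseteq> Z"
  unfolding clk_def by blast

lemma clk_insert_mcl:
  assumes "Y \<subseteq> X" "int (card Y) \<le> k" "e \<in> mcl E indep Y"
  shows "clk E indep k (insert e X) = clk E indep k X"
proof -
  have "insert e X \<subseteq> Z \<longleftrightarrow> X \<subseteq> Z" if "k_closed E indep k Z" for Z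
    using that assms unfolding k_closed_def by blast
  then have "{Z. insert e X \<subseteq> Z \<and> k_closed E indep k Z} = {Z. X \<subseteq> Z \<and> k_closed E indep k Z}"
    by blast
  then show ?thesis unfolding clk_def by simp
qed

locale indep_matroid =
  fixes E :: "'a set" and indep :: "'a set \<Rightarrow> bool"
  assumes matroid: "matroid E indep"
begin

lemma finite_E: "finite E"
  using matroid by (simp add: matroid_def)

lemma indep_empty: "indep {}"
  using matroid by (simp add: matroid_def)

lemma indep_subset_E: "indep X \<Longrightarrow> X \<subseteq> E"
  using matroid by (simp add: matroid_def)

lemma indep_subset: "indep X \<Longrightarrow> Y \<subseteq> X \<Longrightarrow> indep Y"
  using matroid unfolding matroid_def by blast

lemma indep_augment:
  "indep X \<Longrightarrow> indep Y \<Longrightarrow> card X < card Y \<Longrightarrow> \<exists>e\<in>Y - X. indep (insert e X)"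
  using matroid unfolding matroid_def by blast

lemma finite_indep: "indep X \<Longrightarrow> finite X"
  using indep_subset_E finite_E finite_subset by blast

definition is_basis :: "'a set \<Rightarrow> 'a set \<Rightarrow> bool" where
  "is_basis X K \<longleftrightarrow> K \<subseteq> X \<and> indep K \<and> card K = mrank indep X"

lemma finite_indep_cards: "finite {card I | I. I \<subseteq> X \<and> indep I}"
proof (rule finite_subset)
  show "{card I | I. I \<subseteq> X \<and> indep I} \<subseteq> {..card E}"
    using indep_subset_E finite_E by (auto intro: card_mono)
qed simp

lemma card_le_mrank: "I \<subseteq> X \<Longrightarrow> indep I \<Longrightarrow> card I \<le> mrank indep X"
  unfolding mrank_def using finite_indep_cards by (auto intro: Max_ge)

lemma ex_basis: "\<exists>K. is_basis X K"
proof -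
  have "{card I | I. I \<subseteq> X \<and> indep I} \<noteq> {}" using indep_empty by blast
  then have "mrank indep X \<in> {card I | I. I \<subseteq> X \<and> indep I}"
    unfolding mrank_def using finite_indep_cards by (rule Max_in[rotated])
  then show ?thesis unfolding is_basis_def by auto
qed

lemma mrank_mono:
  assumes "X \<subseteq> Y"
  shows "mrank indep X \<le> mrank indep Y"
proof -
  obtain K where "is_basis X K" using ex_basis by blast
  then show ?thesis using assms card_le_mrank[of K Y] unfolding is_basis_def by auto
qed

lemma mrank_indep:
  assumes "indep I"
  shows "mrank indep I = card I"
proof -
  obtain K where "is_basis I K" using ex_basis by blast
  then have "mrank indep I \<le> card I"
    using card_mono[OF finite_indep[OF assms], of K] unfolding is_basis_def by simp
  then show ?thesis using card_le_mrank[OF order_refl assms] by simp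
qed

lemma extend_to_basis:
  assumes "I \<subseteq> X" "indep I"
  shows "\<exists>K. I \<subseteq> K \<and> is_basis X K"
proof -
  let ?\<K> = "{K. I \<subseteq> K \<and> K \<subseteq> X \<and> indep K}"
  have "?\<K> \<subseteq> Pow E" using indep_subset_E by blast
  then have "finite ?\<K>" using finite_E by (simp add: finite_subset)
  then have fin: "finite (card ` ?\<K>)" by simp
  moreover have "card ` ?\<K> \<noteq> {}" using assms by blast
  ultimately have "Max (card ` ?\<K>) \<in> card ` ?\<K>" by (rule Max_in)
  then obtain K where K: "K \<in> ?\<K>" "card K = Max (card ` ?\<K>)" by auto
  have "card K = mrank indep X"
  proof (rule ccontr)
    assume "card K \<noteq> mrank indep X"
    with K have "card K < mrank indep X" using card_le_mrank le_neq_implies_less by blast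
    moreover obtain L where L: "is_basis X L" using ex_basis by blast
    ultimately obtain f where f: "f \<in> L - K" "indep (insert f K)"
      using K indep_augment[of K L] unfolding is_basis_def by auto
    then have "insert f K \<in> ?\<K>" using K L unfolding is_basis_def by auto
    then have "card (insert f K) \<le> card K" using fin K(2) by simp
    then show False using f K finite_indep by simp
  qed
  then show ?thesis using K unfolding is_basis_def by blast
qed

lemma mcl_iff_dependent:
  assumes K: "is_basis X K" and e: "e \<in> E" "e \<notin> K"
  shows "e \<in> mcl E indep X \<longleftrightarrow> \<not> indep (insert e K)"
proof -
  have KX: "K \<subseteq> X" "indep K" "card K = mrank indep X" using K unfolding is_basis_def by auto
  have card_insert: "card (insert e K) = Suc (card K)" using e(2) finite_indep[OF KX(2)] by simp
  show ?thesis
  proof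
    assume "e \<in> mcl E indep X"
    then have rank_eq: "mrank indep (insert e X) = mrank indep X" by (simp add: mcl_def)
    show "\<not> indep (insert e K)"
    proof
      assume "indep (insert e K)"
      then have "card (insert e K) \<le> mrank indep (insert e X)"
        using KX(1) by (intro card_le_mrank) auto
      then show False using card_insert rank_eq KX(3) by simp
    qed
  next
    assume dep: "\<not> indep (insert e K)"
    have "mrank indep (insert e X) \<le> mrank indep X"
    proof (rule ccontr)
      assume "\<not> ?thesis"
      moreover obtain J where J: "J \<subseteq> insert e X" "indep J" "card J = mrank indep (insert e X)"
        using ex_basis unfolding is_basis_def by blast
      ultimately obtain g where g: "g \<in> J - K" "indep (insert g K)"
        using indep_augment[OF KX(2) J(2)] KX(3) by auto
      then have "g \<in> X" using dep J(1) by auto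
      then have "card (insert g K) \<le> mrank indep X"
        using KX(1) g(2) by (intro card_le_mrank) auto
      then show False using g(1) finite_indep[OF KX(2)] KX(3) by simp
    qed
    moreover have "mrank indep X \<le> mrank indep (insert e X)" by (rule mrank_mono) blast
    ultimately show "e \<in> mcl E indep X" using e(1) by (simp add: mcl_def)
  qed
qed

lemma mem_mcl: "e \<in> X \<Longrightarrow> e \<in> E \<Longrightarrow> e \<in> mcl E indep X"
  by (simp add: mcl_def insert_absorb)

lemma mcl_if_dependent:
  assumes "indep I" "\<not> indep (insert e I)" "e \<in> E"
  shows "e \<in> mcl E indep I"
proof -
  have "is_basis I I" using assms(1) mrank_indep unfolding is_basis_def by simp
  moreover have "e \<notin> I" using assms(1,2) by (auto simp: insert_absorb)
  ultimately show ?thesis using mcl_iff_dependent assms by blast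
qed

lemma mcl_mono:
  assumes "Y \<subseteq> X"
  shows "mcl E indep Y \<subseteq> mcl E indep X"
proof
  fix e assume e: "e \<in> mcl E indep Y"
  then have "e \<in> E" by (simp add: mcl_def)
  show "e \<in> mcl E indep X"
  proof (cases "e \<in> X")
    case True
    then show ?thesis using \<open>e \<in> E\<close> by (rule mem_mcl)
  next
    case False
    obtain I where I: "is_basis Y I" using ex_basis by blast
    then obtain K where K: "I \<subseteq> K" "is_basis X K"
      using assms extend_to_basis unfolding is_basis_def by (meson order_trans)
    have "e \<notin> I" "e \<notin> K" using False I K assms unfolding is_basis_def by auto
    then have "\<not> indep (insert e I)" using mcl_iff_dependent I e \<open>e \<in> E\<close> by blast
    then have "\<not> indep (insert e K)" using K(1) indep_subset by blast
    then show ?thesis using mcl_iff_dependent K(2) \<open>e \<in> E\<close> \<open>e \<notin> K\<close> by blast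
  qed
qed

lemma mcl_indep_eq_flat:
  assumes F: "flat E indep F" and B: "B \<subseteq> F" "indep B" "card B = mrank indep F"
  shows "mcl E indep B = F"
proof
  show "mcl E indep B \<subseteq> F" using F B(1) mcl_mono unfolding flat_def by blast
  show "F \<subseteq> mcl E indep B"
  proof
    fix e assume e: "e \<in> F"
    then have "e \<in> E" using F unfolding flat_def by blast
    show "e \<in> mcl E indep B"
    proof (cases "e \<in> B")
      case False
      then have "\<not> indep (insert e B)"
        using card_le_mrank[of "insert e B" F] B e finite_indep by auto
      then show ?thesis using mcl_if_dependent B(2) \<open>e \<in> E\<close> by blast
    qed (use \<open>e \<in> E\<close> mem_mcl in blast)
  qed
qed

lemma k_closed_flat: "flat E indep F \<Longrightarrow> k_closed E indep k F"
  using mcl_mono[of _ F] unfolding k_closed_def flat_def by blast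

lemma clk_flat: "flat E indep F \<Longrightarrow> clk E indep k F = F"
  using clk_least[OF k_closed_flat order_refl] clk_superset[of F] by blast

end

locale ordered_matroid = indep_matroid E indep
  for E :: "'a::linorder set" and indep :: "'a set \<Rightarrow> bool"
begin

subsection \<open>The sets \<open>U\<^sup>*\<^sub>F\<close>\<close>

definition Ustar_candidates :: "'a set \<Rightarrow> 'a set set" where
  "Ustar_candidates F = {U. U \<subseteq> E \<and> clk E indep (int (mrank indep F) - 1) U = F}"

lemma Ustar_least:
  assumes "flat E indep F"
  shows "Ustar E indep F \<in> Ustar_candidates F
    \<and> (\<forall>W\<in>Ustar_candidates F. \<not> glex_less W (Ustar E indep F))"
proof -
  have sub: "Ustar_candidates F \<subseteq> Pow E" unfolding Ustar_candidates_def by blast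
  then have "finite (Ustar_candidates F)" using finite_E finite_subset by auto
  moreover have "\<forall>X\<in>Ustar_candidates F. finite X" using sub finite_E finite_subset by blast
  moreover have "F \<in> Ustar_candidates F"
    using assms clk_flat unfolding Ustar_candidates_def flat_def by blast
  ultimately show ?thesis
    unfolding Ustar_def Ustar_candidates_def[symmetric] by (intro glex_min_least) auto
qed

lemma Ustar_subset_E: "flat E indep F \<Longrightarrow> Ustar E indep F \<subseteq> E"
  using Ustar_least unfolding Ustar_candidates_def by blast

lemma clk_Ustar: "flat E indep F \<Longrightarrow> clk E indep (int (mrank indep F) - 1) (Ustar E indep F) = F"
  using Ustar_least unfolding Ustar_candidates_def by blast

lemma not_glex_less_Ustar:
  "flat E indep F \<Longrightarrow> W \<subseteq> E \<Longrightarrow> clk E indep (int (mrank indep F) - 1) W = F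
    \<Longrightarrow> \<not> glex_less W (Ustar E indep F)"
  using Ustar_least unfolding Ustar_candidates_def by blast

lemma finite_Ustar: "flat E indep F \<Longrightarrow> finite (Ustar E indep F)"
  using Ustar_subset_E finite_E finite_subset by blast

lemma Ustar_subset_flat: "flat E indep F \<Longrightarrow> Ustar E indep F \<subseteq> F"
  using clk_superset[of "Ustar E indep F" E indep "int (mrank indep F) - 1"] clk_Ustar[of F] by simp

text \<open>A dependent subset of size at most \<open>rank F\<close> would contain an element \<open>u\<close> spanned by fewer
  than \<open>rank F\<close> others, so \<open>U\<^sup>*\<^sub>F - {u}\<close> would have the same \<open>(rank F - 1)\<close>-closure.\<close>

lemma indep_if_subset_Ustar:
  assumes F: "flat E indep F" and Y: "Y \<subseteq> Ustar E indep F" "card Y \<le> mrank indep F"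
  shows "indep Y"
proof (rule ccontr)
  assume "\<not> indep Y"
  define U where "U = Ustar E indep F"
  define k where "k = int (mrank indep F) - 1"
  obtain I where I: "I \<subseteq> Y" "indep I" "card I = mrank indep Y"
    using ex_basis unfolding is_basis_def by blast
  then have "I \<noteq> Y" using \<open>\<not> indep Y\<close> by blast
  then obtain u where u: "u \<in> Y" "u \<notin> I" using I(1) by blast
  have "\<not> indep (insert u I)"
  proof
    assume "indep (insert u I)"
    then have "card (insert u I) \<le> mrank indep Y" using u(1) I(1) by (intro card_le_mrank) auto
    then show False using u(2) I(3) finite_indep[OF I(2)] by simp
  qed
  moreover have "u \<in> E" using u(1) Y(1) Ustar_subset_E[OF F] by blast
  ultimately have "u \<in> mcl E indep I" using mcl_if_dependent I(2) by blast
  have "finite Y" using Y(1) finite_Ustar[OF F] finite_subset by blast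
  then have "card I < card Y" using I(1) \<open>I \<noteq> Y\<close> by (intro psubset_card_mono) auto
  then have "int (card I) \<le> k" using Y(2) unfolding k_def by simp
  have "clk E indep k (insert u (U - {u})) = clk E indep k (U - {u})"
    by (rule clk_insert_mcl[OF _ \<open>int (card I) \<le> k\<close> \<open>u \<in> mcl E indep I\<close>])
      (use I(1) u Y(1) in \<open>auto simp: U_def\<close>)
  moreover have "insert u (U - {u}) = U" using u(1) Y(1) unfolding U_def by blast
  ultimately have "clk E indep k (U - {u}) = F" using clk_Ustar[OF F] unfolding U_def k_def by simp
  moreover have "U - {u} \<subseteq> E" using Ustar_subset_E[OF F] unfolding U_def by blast
  moreover have "glex_less (U - {u}) U"
    using finite_Ustar[OF F] u(1) Y(1) unfolding U_def
    by (intro glex_less_if_card_less card_Diff1_less) auto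
  ultimately show False using not_glex_less_Ustar[OF F, of "U - {u}"] unfolding U_def k_def by simp
qed

lemma mcl_eq_if_subset_Ustar:
  assumes F: "flat E indep F" and B: "B \<subseteq> Ustar E indep F" "card B = mrank indep F"
  shows "mcl E indep B = F"
proof -
  have "indep B" using indep_if_subset_Ustar[OF F B(1)] B(2) by simp
  moreover have "B \<subseteq> F" using B(1) Ustar_subset_flat[OF F] by blast
  ultimately show ?thesis using mcl_indep_eq_flat[OF F] B(2) by blast
qed

text \<open>If \<open>V - {x}\<close> lay in \<open>U\<^sup>*\<^sub>{F'}\<close>, exchanging \<open>max V\<close> for the smaller \<open>x\<close> would keep the
  \<open>(rank F' - 1)\<close>-closure, because each of the two elements is spanned by the
  \<open>rank F\<close> others of \<open>V\<close>.\<close>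

lemma remove_nonmax_not_subset_Ustar:
  assumes F: "flat E indep F" and V: "V \<subseteq> Ustar E indep F" "card V = Suc (mrank indep F)"
    and x: "x \<in> V" "x < Max V"
    and F': "flat E indep F'" "mrank indep F < mrank indep F'"
  shows "\<not> V - {x} \<subseteq> Ustar E indep F'"
proof
  assume sub: "V - {x} \<subseteq> Ustar E indep F'"
  define U' where "U' = Ustar E indep F'"
  define m where "m = Max V"
  define k' where "k' = int (mrank indep F') - 1"
  have "finite V" using V(2) card.infinite by fastforce
  then have "m \<in> V" using x(1) Max_in unfolding m_def by blast
  then have "m \<in> U'" using sub x(2) unfolding U'_def m_def by auto
  have "x \<notin> U'"
  proof
    assume "x \<in> U'"
    then have "indep V"
      using sub V(2) F' unfolding U'_def by (intro indep_if_subset_Ustar[OF F'(1)]) auto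
    moreover have "V \<subseteq> F" using V(1) Ustar_subset_flat[OF F] by blast
    ultimately have "card V \<le> mrank indep F" using card_le_mrank by blast
    then show False using V(2) by simp
  qed
  have spans: "y \<in> mcl E indep (V - {z})" if "y \<in> V" "z \<in> V" for y z
  proof -
    have "card (V - {z}) = mrank indep F" using that(2) V(2) \<open>finite V\<close> by simp
    then have "mcl E indep (V - {z}) = F" using V(1) by (intro mcl_eq_if_subset_Ustar[OF F]) auto
    then show ?thesis using that(1) V(1) Ustar_subset_flat[OF F] by blast
  qed
  have small: "int (card (V - {z})) \<le> k'" if "z \<in> V" for z
    using that V(2) F'(2) \<open>finite V\<close> unfolding k'_def by simp
  have "clk E indep k' (insert x (U' - {m})) = clk E indep k' (insert m (insert x (U' - {m})))"
    using x(1) sub \<open>m \<in> V\<close> unfolding U'_def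
    by (intro clk_insert_mcl[symmetric, OF _ small[of m] spans[of m m]]) auto
  also have "insert m (insert x (U' - {m})) = insert x U'" using \<open>m \<in> U'\<close> by auto
  also have "clk E indep k' (insert x U') = clk E indep k' U'"
    using sub x(1) unfolding U'_def by (intro clk_insert_mcl[OF _ small[of x] spans[of x x]]) auto
  finally have "clk E indep k' (insert x (U' - {m})) = F'"
    using clk_Ustar[OF F'(1)] unfolding U'_def k'_def by simp
  moreover have "insert x (U' - {m}) \<subseteq> E"
    using Ustar_subset_E[OF F'(1)] Ustar_subset_E[OF F] x(1) V(1) unfolding U'_def by blast
  moreover have "glex_less (insert x (U' - {m})) U'"
    using finite_Ustar[OF F'(1)] \<open>m \<in> U'\<close> \<open>x \<notin> U'\<close> x(2) unfolding U'_def m_def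
    by (rule glex_less_exchange)
  ultimately show False using not_glex_less_Ustar[OF F'(1)] unfolding U'_def k'_def by blast
qed

subsection \<open>The antichain\<close>

lemma mem_Ustar_kE:
  assumes "U \<in> Ustar_k E indep k"
  obtains F where "flat E indep F" "mrank indep F = k" "U = Ustar E indep F" "k < card U"
  using assms unfolding Ustar_k_def by blast

lemma mem_V_kE:
  assumes "V \<in> V_k E indep k"
  obtains F where "flat E indep F" "mrank indep F = k" "V \<subseteq> Ustar E indep F"
    "card V = Suc k" "consecutive V (Ustar E indep F)"
proof -
  obtain U where U: "U \<in> Ustar_k E indep k" "V \<in> Vsets k U" using assms unfolding V_k_def by blast
  then obtain F where "flat E indep F" "mrank indep F = k" "U = Ustar E indep F"
    by (elim mem_Ustar_kE)
  then show ?thesis using U(2) that unfolding Vsets_def by simp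
qed

lemma finite_Ustar_k: "finite (Ustar_k E indep k)"
proof (rule finite_subset)
  show "Ustar_k E indep k \<subseteq> Pow E"
  proof
    fix U assume "U \<in> Ustar_k E indep k"
    then obtain F where "flat E indep F" "U = Ustar E indep F" by (rule mem_Ustar_kE)
    then show "U \<in> Pow E" using Ustar_subset_E by simp
  qed
qed (simp add: finite_E)

lemma V_k_subset_Pow: "V_k E indep k \<subseteq> Pow E"
  using Ustar_subset_E by (fastforce elim: mem_V_kE)

lemma finite_V_k: "finite (V_k E indep k)"
  by (rule finite_subset[OF V_k_subset_Pow]) (simp add: finite_E)

lemma finite_mem_V_k: "V \<in> V_k E indep k \<Longrightarrow> finite V"
  by (elim mem_V_kE) (simp add: card_ge_0_finite)

definition deletions :: "nat \<Rightarrow> 'a set set" where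
  "deletions k = (\<lambda>(V, x). V - {x}) ` (SIGMA V:V_k E indep k. V - {Max V})"

lemma mem_deletionsE:
  assumes "S \<in> deletions k"
  obtains V x where "V \<in> V_k E indep k" "x \<in> V" "x < Max V" "S = V - {x}"
proof -
  obtain V x where V: "V \<in> V_k E indep k" "x \<in> V" "x \<noteq> Max V" "S = V - {x}"
    using assms unfolding deletions_def by auto
  then have "x < Max V" using Max_ge[OF finite_mem_V_k] by (simp add: order_less_le)
  then show ?thesis using that V by blast
qed

lemma deletion_subset_Ustar:
  assumes "S \<in> deletions k"
  shows "\<exists>F. flat E indep F \<and> mrank indep F = k \<and> S \<subseteq> Ustar E indep F \<and> card S = k"
proof -
  obtain V x where V: "V \<in> V_k E indep k" "x \<in> V" "S = V - {x}" by (rule mem_deletionsE[OF assms])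
  obtain F where "flat E indep F" "mrank indep F = k" "V \<subseteq> Ustar E indep F" "card V = Suc k"
    using V(1) by (rule mem_V_kE)
  then show ?thesis using V finite_mem_V_k by auto
qed

lemma deletion_not_subset_Ustar:
  assumes "S \<in> deletions k" "flat E indep F'" "k < mrank indep F'"
  shows "\<not> S \<subseteq> Ustar E indep F'"
proof -
  obtain V x where V: "V \<in> V_k E indep k" "x \<in> V" "x < Max V" "S = V - {x}"
    by (rule mem_deletionsE[OF assms(1)])
  obtain F where "flat E indep F" "mrank indep F = k" "V \<subseteq> Ustar E indep F" "card V = Suc k"
    using V(1) by (rule mem_V_kE)
  then show ?thesis using remove_nonmax_not_subset_Ustar V assms(2,3) by simp
qed

text \<open>\<open>V - {x}\<close> spans the flat \<open>F\<close> with \<open>V \<subseteq> U\<^sup>*\<^sub>F\<close>, and contains \<open>max V\<close>; a consecutive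
  subset of \<open>U\<^sup>*\<^sub>F\<close> is determined by its maximum.\<close>

lemma inj_on_remove_nonmax:
  "inj_on (\<lambda>(V, x). V - {x}) (SIGMA V:V_k E indep k. V - {Max V})"
proof (rule inj_onI)
  fix p q
  assume "p \<in> (SIGMA V:V_k E indep k. V - {Max V})" "q \<in> (SIGMA V:V_k E indep k. V - {Max V})"
    and "(\<lambda>(V, x). V - {x}) p = (\<lambda>(V, x). V - {x}) q"
  then obtain V x W y where pq: "p = (V, x)" "q = (W, y)"
    and V: "V \<in> V_k E indep k" "x \<in> V" "x \<noteq> Max V"
    and W: "W \<in> V_k E indep k" "y \<in> W" "y \<noteq> Max W"
    and eq: "V - {x} = W - {y}" by auto
  obtain F where F: "flat E indep F" "mrank indep F = k" "V \<subseteq> Ustar E indep F"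
    "card V = Suc k" "consecutive V (Ustar E indep F)"
    using V(1) by (rule mem_V_kE)
  obtain G where G: "flat E indep G" "mrank indep G = k" "W \<subseteq> Ustar E indep G"
    "card W = Suc k" "consecutive W (Ustar E indep G)"
    using W(1) by (rule mem_V_kE)
  have fin: "finite V" "finite W" "V \<noteq> {}" "W \<noteq> {}"
    using finite_mem_V_k V(1) W(1) F(4) G(4) by auto
  have "Max V \<in> W" "Max W \<in> V"
    using eq V(3) W(3) Max_in[OF fin(1,3)] Max_in[OF fin(2,4)] by blast+
  then have "Max V = Max W" using Max_ge[OF fin(1)] Max_ge[OF fin(2)] by (simp add: order_antisym)
  have "F = mcl E indep (V - {x})"
    using F V(2) fin by (intro mcl_eq_if_subset_Ustar[symmetric]) auto
  also have "\<dots> = G"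
    using G W(2) fin eq by (intro mcl_eq_if_subset_Ustar) auto
  finally have "V = W"
    using consecutive_eq_if_Max_eq[OF finite_Ustar[OF F(1)] F(5)] G(5) F(4) G(4) fin(3)
      \<open>Max V = Max W\<close> by simp
  then have "x = y" using eq V(2) W(2) by blast
  then show "p = q" using pq \<open>V = W\<close> by simp
qed

lemma card_deletions: "card (deletions k) = k * card (V_k E indep k)"
proof -
  have "card (deletions k) = card (SIGMA V:V_k E indep k. V - {Max V})"
    unfolding deletions_def by (rule card_image[OF inj_on_remove_nonmax])
  also have "\<dots> = (\<Sum>V\<in>V_k E indep k. card (V - {Max V}))"
    using finite_V_k finite_mem_V_k by (intro card_SigmaI) auto
  also have "\<dots> = (\<Sum>V\<in>V_k E indep k. k)"
  proof (rule sum.cong[OF refl])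
    fix V assume "V \<in> V_k E indep k"
    then have "finite V" "card V = Suc k" by (auto elim: mem_V_kE simp: finite_mem_V_k)
    then show "card (V - {Max V}) = k" using Max_in[of V] by fastforce
  qed
  finally show ?thesis by simp
qed

definition Ustar_k_subsets :: "nat \<Rightarrow> 'a set set" where
  "Ustar_k_subsets k = (\<Union>U\<in>Ustar_k E indep k. {B. B \<subseteq> U \<and> card B = k})"

lemma Ustar_k_subset_subset_Ustar:
  assumes "S \<in> Ustar_k_subsets k"
  shows "\<exists>F. flat E indep F \<and> mrank indep F = k \<and> S \<subseteq> Ustar E indep F \<and> card S = k"
  using assms unfolding Ustar_k_subsets_def by (auto elim: mem_Ustar_kE)

lemma card_Ustar_k_subsets:
  "card (Ustar_k_subsets k) = (\<Sum>U\<in>Ustar_k E indep k. card U choose k)"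
proof -
  have fin: "finite U" if "U \<in> Ustar_k E indep k" for U
    using that finite_Ustar by (auto elim: mem_Ustar_kE)
  \<comment> \<open>A common \<open>k\<close>-subset of two members would span both of their flats.\<close>
  have disjoint: "{B. B \<subseteq> U1 \<and> card B = k} \<inter> {B. B \<subseteq> U2 \<and> card B = k} = {}"
    if U1: "U1 \<in> Ustar_k E indep k" and U2: "U2 \<in> Ustar_k E indep k" and "U1 \<noteq> U2" for U1 U2
  proof -
    obtain F1 where F1: "flat E indep F1" "mrank indep F1 = k" "U1 = Ustar E indep F1"
      using U1 by (rule mem_Ustar_kE)
    obtain F2 where F2: "flat E indep F2" "mrank indep F2 = k" "U2 = Ustar E indep F2"
      using U2 by (rule mem_Ustar_kE)
    have "F1 = F2" if "B \<subseteq> U1" "B \<subseteq> U2" "card B = k" for B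
      using mcl_eq_if_subset_Ustar[OF F1(1), of B] mcl_eq_if_subset_Ustar[OF F2(1), of B] that F1 F2
      by simp
    then show ?thesis using F1(3) F2(3) \<open>U1 \<noteq> U2\<close> by blast
  qed
  have "card (Ustar_k_subsets k) = (\<Sum>U\<in>Ustar_k E indep k. card {B. B \<subseteq> U \<and> card B = k})"
    unfolding Ustar_k_subsets_def using finite_Ustar_k fin disjoint
    by (intro card_UN_disjoint) auto
  also have "\<dots> = (\<Sum>U\<in>Ustar_k E indep k. card U choose k)"
    using fin by (intro sum.cong refl n_subsets)
  finally show ?thesis .
qed

lemma card_V_k_le_Ustar_k_subsets:
  assumes "2 \<le> k"
  shows "Suc k * card (V_k E indep k) \<le> card (Ustar_k_subsets k)"
proof -
  have "card (V_k E indep k) \<le> (\<Sum>U\<in>Ustar_k E indep k. card (Vsets k U))"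
    unfolding V_k_def by (rule card_UN_le[OF finite_Ustar_k])
  also have "\<dots> \<le> (\<Sum>U\<in>Ustar_k E indep k. card U - k)"
    using finite_Ustar by (intro sum_mono card_Vsets_le) (auto elim: mem_Ustar_kE)
  finally have "Suc k * card (V_k E indep k) \<le> Suc k * (\<Sum>U\<in>Ustar_k E indep k. card U - k)"
    by (rule mult_le_mono2)
  also have "\<dots> = (\<Sum>U\<in>Ustar_k E indep k. Suc k * (card U - k))"
    by (rule sum_distrib_left)
  also have "\<dots> \<le> (\<Sum>U\<in>Ustar_k E indep k. card U choose k)"
    using assms by (intro sum_mono binomial_ge_Suc_mult) (auto elim: mem_Ustar_kE)
  finally show ?thesis by (simp add: card_Ustar_k_subsets)
qed

definition level :: "nat \<Rightarrow> nat \<Rightarrow> 'a set set" where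
  "level r k = (if k = 0 then V_k E indep 0 else if k = r - 1 then Ustar_k_subsets k else deletions k)"

lemma level_zero:
  assumes "S \<in> level r 0"
  shows "card S = 1 \<and> \<not> indep S"
proof -
  obtain F where F: "flat E indep F" "mrank indep F = 0" "S \<subseteq> Ustar E indep F" "card S = 1"
    using assms unfolding level_def by (auto elim: mem_V_kE)
  have "\<not> indep S"
  proof
    assume "indep S"
    have "S \<subseteq> F" using F(1,3) Ustar_subset_flat by blast
    then have "card S \<le> mrank indep F" using \<open>indep S\<close> by (rule card_le_mrank)
    then show False using F(2,4) by simp
  qed
  then show ?thesis using F(4) by simp
qed

lemma level_subset_Ustar:
  assumes "S \<in> level r k" "0 < k"
  shows "\<exists>F. flat E indep F \<and> mrank indep F = k \<and> S \<subseteq> Ustar E indep F \<and> card S = k"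
proof (cases "k = r - 1")
  case True
  then show ?thesis using assms Ustar_k_subset_subset_Ustar unfolding level_def by simp
next
  case False
  then show ?thesis using assms deletion_subset_Ustar unfolding level_def by simp
qed

lemma level_indep:
  assumes "S \<in> level r k" "0 < k"
  shows "indep S"
proof -
  obtain F where "flat E indep F" "mrank indep F = k" "S \<subseteq> Ustar E indep F" "card S = k"
    using level_subset_Ustar[OF assms] by blast
  then show ?thesis using indep_if_subset_Ustar by simp
qed

lemma card_level_mem: "S \<in> level r k \<Longrightarrow> card S = max 1 k"
proof (cases "k = 0")
  case False
  assume "S \<in> level r k"
  then show ?thesis using level_subset_Ustar[of S r k] False by auto
qed (use level_zero in simp)

lemma level_not_subset_Ustar:
  "S \<in> level r k \<Longrightarrow> 0 < k \<Longrightarrow> k \<noteq> r - 1 \<Longrightarrow> flat E indep F' \<Longrightarrow> k < mrank indep F'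
    \<Longrightarrow> \<not> S \<subseteq> Ustar E indep F'"
  unfolding level_def using deletion_not_subset_Ustar by simp

lemma level_subset_Pow: "level r k \<subseteq> Pow E"
proof
  fix S assume S: "S \<in> level r k"
  show "S \<in> Pow E"
  proof (cases "k = 0")
    case True
    then show ?thesis using S V_k_subset_Pow unfolding level_def by auto
  next
    case False
    then obtain F where "flat E indep F" "S \<subseteq> Ustar E indep F"
      using S level_subset_Ustar by blast
    then show ?thesis using Ustar_subset_E by auto
  qed
qed

lemma finite_level: "finite (level r k)"
  by (rule finite_subset[OF level_subset_Pow]) (simp add: finite_E)

lemma disjoint_levels:
  assumes "i \<noteq> j"
  shows "level r i \<inter> level r j = {}"
proof (rule ccontr)
  assume "level r i \<inter> level r j \<noteq> {}"
  then obtain S where S: "S \<in> level r i" "S \<in> level r j" by blast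
  then have "max 1 i = max 1 j" using card_level_mem[OF S(1)] card_level_mem[OF S(2)] by simp
  then have "i = 0 \<and> 0 < j \<or> j = 0 \<and> 0 < i" using assms by (simp add: max_def split: if_split_asm)
  then show False
  proof
    assume "i = 0 \<and> 0 < j"
    then show False using level_zero[of S r] level_indep[of S r j] S by simp
  next
    assume "j = 0 \<and> 0 < i"
    then show False using level_zero[of S r] level_indep[of S r i] S by simp
  qed
qed

text \<open>Members of a lower level are either loops or, by \<open>remove_nonmax_not_subset_Ustar\<close>, lie in
  no \<open>U\<^sup>*\<^sub>F\<close> of higher rank, while members of higher levels are independent subsets of such a set.\<close>

lemma antichain_levels: "antichain (\<Union>k\<in>{0..r - 1}. level r k)"
  unfolding antichain_def
proof (intro ballI impI)
  fix S T
  assume "S \<in> (\<Union>k\<in>{0..r - 1}. level r k)" "T \<in> (\<Union>k\<in>{0..r - 1}. level r k)" "S \<subseteq> T"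
  then obtain i j where S: "S \<in> level r i" and T: "T \<in> level r j" and "j \<le> r - 1" by auto
  show "S = T"
  proof (rule ccontr)
    assume "S \<noteq> T"
    moreover have "finite T" using T level_subset_Pow by (meson PowD finite_E rev_finite_subset subsetD)
    ultimately have "card S < card T" using \<open>S \<subseteq> T\<close> by (intro psubset_card_mono) auto
    then have "i < j" "0 < j"
      using card_level_mem[OF S] card_level_mem[OF T] by (simp_all add: max_def split: if_split_asm)
    have "indep S" using indep_subset[OF level_indep[OF T \<open>0 < j\<close>] \<open>S \<subseteq> T\<close>] .
    then have "0 < i" using level_zero[of S r] S by (cases "i = 0") simp_all
    obtain F' where F': "flat E indep F'" "mrank indep F' = j" "T \<subseteq> Ustar E indep F'"
      using level_subset_Ustar[OF T \<open>0 < j\<close>] by blast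
    have "\<not> S \<subseteq> Ustar E indep F'"
      using \<open>i < j\<close> \<open>j \<le> r - 1\<close> F'(1,2) by (intro level_not_subset_Ustar[OF S \<open>0 < i\<close>]) auto
    then show False using F'(3) \<open>S \<subseteq> T\<close> by blast
  qed
qed

lemma V_k_weight_le_level_weight:
  assumes "3 \<le> r" "k \<le> r - 1"
  shows "real (card (V_k E indep k)) * coef (card E) r k
    \<le> (\<Sum>S\<in>level r k. 1 / real (card E choose card S))"
proof -
  have "(\<Sum>S\<in>level r k. 1 / real (card E choose card S))
      = (\<Sum>S\<in>level r k. 1 / real (card E choose max 1 k))"
    by (rule sum.cong) (simp_all add: card_level_mem)
  then have weight: "(\<Sum>S\<in>level r k. 1 / real (card E choose card S))
      = real (card (level r k)) / real (card E choose max 1 k)"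
    by simp
  consider "k = 0" | "k = r - 1" | "0 < k" "k \<noteq> r - 1" by blast
  then show ?thesis
  proof cases
    case 1
    then show ?thesis unfolding weight using assms(1) by (simp add: level_def coef_def)
  next
    case 2
    then have "r * card (V_k E indep k) \<le> card (level r k)"
      using assms(1) card_V_k_le_Ustar_k_subsets[of k] by (simp add: level_def)
    then have "real r * real (card (V_k E indep k)) / real (card E choose k)
        \<le> real (card (level r k)) / real (card E choose k)"
      by (intro divide_right_mono) (simp_all flip: of_nat_mult)
    then show ?thesis unfolding weight using 2 assms(1) by (simp add: coef_def mult.commute)
  next
    case 3
    then show ?thesis unfolding weight by (simp add: level_def coef_def card_deletions mult.commute)
  qed
qed

end

theorem lemma5p10:
  fixes E :: "'a::linorder set" and indep :: "'a set \<Rightarrow> bool" and r n :: nat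
  assumes "matroid E indep"
    and "mrank indep E = r"
    and "card E = n"
    and "r \<ge> 3"
    and "n \<ge> 2 * r"
  shows "(\<Sum>k = 0..r - 1. real (card (V_k E indep k)) * coef n r k) \<le> 1"
proof -
  interpret ordered_matroid E indep using assms(1) by unfold_locales
  have "(\<Sum>k = 0..r - 1. real (card (V_k E indep k)) * coef n r k)
      \<le> (\<Sum>k = 0..r - 1. \<Sum>S\<in>level r k. 1 / real (card E choose card S))"
  proof (rule sum_mono)
    fix k assume "k \<in> {0..r - 1}"
    then show "real (card (V_k E indep k)) * coef n r k
        \<le> (\<Sum>S\<in>level r k. 1 / real (card E choose card S))"
      using V_k_weight_le_level_weight[of r k] assms(3,4) by simp
  qed
  also have "\<dots> = (\<Sum>S\<in>(\<Union>k\<in>{0..r - 1}. level r k). 1 / real (card E choose card S))"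
    using disjoint_levels finite_level by (intro sum.UNION_disjoint[symmetric]) auto
  also have "\<dots> \<le> 1"
    using level_subset_Pow by (intro LYM_inequality finite_E antichain_levels) blast
  finally show ?thesis .
qed

end
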